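(* Under Assumption 1, for any samples $\theta_1,\dots,\theta_M\in\Theta$, $\mathrm{VI}(F,\mathcal X\times\Delta_M)$ has at least one solution, and for every solution $z^*=(x^*,y^* )$ of it, $x^*$ is a Nash equilibrium of $\mathcal G$, i.e. $x^*\in\Omega$.
   Context: Let $\mathcal N=\{1,\dots,N\}$ be a set of agents. Agent $i$ chooses $x_i\in\mathcal X_i\subset\mathbb R^n$; write $x=(x_i)_{i\in\mathcal N}\in\mathcal X=\mathcal X_1\times\cdots\times\mathcal X_N\subset\mathbb R^{nN}$ and $x_{-i}=(x_j)_{j\neq i}$. Let $\Theta$ be a set, $f_i:\mathbb R^{nN}\to\mathbb R$ ($i\in\mathcal N$) and $g:\mathbb R^{nN}\times\Theta\to\mathbb R$. Given samples $\theta_1,\dots,\theta_M\in\Theta$, the game $\mathcal G$ is the one in which each agent $i$ minimizes over $x_i\in\mathcal X_i$ the cost $J_i(x_i,x_{-i})=f_i(x_i,x_{-i})+\max_{m\in\{1,\dots,M\}}g(x_i,x_{-i},\theta_m)$; its Nash equilibrium set is $\Omega=\{x^*\in\mathcal X: x_i^*\in\arg\min_{x_i\in\mathcal X_i}J_i(x_i,x^*_{-i})\ \forall i\}$. Assumption 1: (i) for every $\theta\in\Theta$ and every $x_{-i}\in\prod_{j\ne i}\mathcal X_j$, the function $f_i(\cdot,x_{-i})+g(\cdot,x_{-i},\theta)$ is convex and continuously differentiable, and each $\mathcal X_i$ is nonempty, compact and convex; (ii) for every $\theta$ and $i$, $g(\cdot,\theta)$ and $f_i$ are twice differentiable on an open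 convex set containing $\mathcal X$; (iii) there are $\chi^f,\chi^g\in\mathbb R$ with $\chi^f+\chi^g\ge0$ such that for all $u,v\in\mathbb R^{nN}$ and $\theta\in\Theta$: $(u-v)^\top\big((\nabla_{u_i}f_i(u))_{i}-(\nabla_{v_i}f_i(v))_{i}\big)\ge\chi^f\|u-v\|^2$ and $(u-v)^\top(\nabla_u g(u,\theta)-\nabla_v g(v,\theta))\ge\chi^g\|u-v\|^2$. Augmented formulation: $\Delta_M=\{y\in\mathbb R^M: y\ge0,\ \sum_m y_m=1\}$, $\hat g(x,y)=\sum_{m=1}^M y_m g(x,\theta_m)$, and $F:\mathcal X\times\Delta_M\to\mathbb R^{nN+M}$, $F(x,y)=\big((\nabla_{x_i}f_i(x)+\nabla_{x_i}\hat g(x,y))_{i\in\mathcal N},\ -(\nabla_{y_m}\hat g(x,y))_{m=1}^M\big)$. $\mathrm{VI}(F,\mathcal X\times\Delta_M)$ is the problem: find $z^*\in\mathcal X\times\Delta_M$ with $(z-z^* )^\top F(z^* )\ge0$ for all $z\in\mathcal X\times\Delta_M$. *)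

theory Defs
  imports "HOL-Analysis.Analysis"
begin

text \<open>Joint strategies x in R^(nN) are modelled as elements of real^'n^'a:
  'a is the (finite) index type of the agents (N = CARD('a)), 'n the index
  type of the coordinates of one agent's decision (n = CARD('n)).
  Sample indices m are elements of a finite type 'm (M = CARD('m)).\<close>

definition blk_upd :: "real^'n^'a \<Rightarrow> 'a \<Rightarrow> real^'n \<Rightarrow> real^'n^'a" where
  "blk_upd x i u = (\<chi> j. if j = i then u else x $ j)"

definition grad :: "('v::real_inner \<Rightarrow> real) \<Rightarrow> 'v \<Rightarrow> 'v" where
  "grad h v = (THE D. GDERIV h v :> D)"

definition pgrad :: "(real^'n^'a \<Rightarrow> real) \<Rightarrow> 'a \<Rightarrow> real^'n^'a \<Rightarrow> real^'n" where
  "pgrad h i x = grad (\<lambda>u. h (blk_upd x i u)) (x $ i)"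

definition prod_set :: "('a \<Rightarrow> (real^'n) set) \<Rightarrow> (real^'n^'a) set" where
  "prod_set X = {x. \<forall>i. x $ i \<in> X i}"

definition prob_simplex :: "(real^'m) set" where
  "prob_simplex = {y. (\<forall>m. 0 \<le> y $ m) \<and> (\<Sum>m\<in>UNIV. y $ m) = 1}"

definition cost :: "('a \<Rightarrow> real^'n^'a \<Rightarrow> real) \<Rightarrow> (real^'n^'a \<Rightarrow> 'th \<Rightarrow> real)
    \<Rightarrow> ('m::finite \<Rightarrow> 'th) \<Rightarrow> 'a \<Rightarrow> real^'n^'a \<Rightarrow> real" where
  "cost f g \<theta> i x = f i x + Max ((\<lambda>m. g x (\<theta> m)) ` UNIV)"

definition nash_set :: "('a \<Rightarrow> real^'n^'a \<Rightarrow> real) \<Rightarrow> (real^'n^'a \<Rightarrow> 'th \<Rightarrow> real)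
    \<Rightarrow> ('m::finite \<Rightarrow> 'th) \<Rightarrow> ('a \<Rightarrow> (real^'n) set) \<Rightarrow> (real^'n^'a) set" where
  "nash_set f g \<theta> X = {xs. xs \<in> prod_set X \<and>
     (\<forall>i. \<forall>u \<in> X i. cost f g \<theta> i xs \<le> cost f g \<theta> i (blk_upd xs i u))}"

definition ghat :: "(real^'n^'a \<Rightarrow> 'th \<Rightarrow> real) \<Rightarrow> ('m::finite \<Rightarrow> 'th)
    \<Rightarrow> real^'n^'a \<Rightarrow> real^'m \<Rightarrow> real" where
  "ghat g \<theta> x y = (\<Sum>m\<in>UNIV. y $ m * g x (\<theta> m))"

definition Fop :: "('a \<Rightarrow> real^'n^'a \<Rightarrow> real) \<Rightarrow> (real^'n^'a \<Rightarrow> 'th \<Rightarrow> real)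
    \<Rightarrow> ('m::finite \<Rightarrow> 'th) \<Rightarrow> (real^'n^'a) \<times> (real^'m) \<Rightarrow> (real^'n^'a) \<times> (real^'m)" where
  "Fop f g \<theta> z = (case z of (x, y) \<Rightarrow>
     ((\<chi> i. pgrad (f i) i x + pgrad (\<lambda>x'. ghat g \<theta> x' y) i x),
      - grad (\<lambda>y'. ghat g \<theta> x y') y))"

definition VI_sol :: "('v::real_inner \<Rightarrow> 'v) \<Rightarrow> 'v set \<Rightarrow> 'v \<Rightarrow> bool" where
  "VI_sol F K z \<longleftrightarrow> z \<in> K \<and> (\<forall>w\<in>K. 0 \<le> inner (w - z) (F z))"

end

theory Submission
  imports Defs
begin

text \<open>Existence is the Hartman--Stampacchia argument: \<open>F\<close> is continuous on the compact convex set
  \<open>X \<times> \<Delta>\<^sub>M\<close>, so \<open>z \<mapsto> P(z - F z)\<close> (with \<open>P\<close> the metric projection onto it) has a Brouwer fixed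
  point, and the projection inequality at a fixed point is the variational inequality.
  For a solution \<open>(x\<^sup>*, y\<^sup>*)\<close>, the \<open>y\<close>-part says that \<open>y\<^sup>*\<close> maximises the linear function
  \<open>y \<mapsto> \<Sum>\<^sub>m y\<^sub>m g(x\<^sup>*, \<theta>\<^sub>m)\<close> over the simplex, whence \<open>ghat(x\<^sup>*, y\<^sup>*) = max\<^sub>m g(x\<^sup>*, \<theta>\<^sub>m)\<close>; the
  \<open>x\<^sub>i\<close>-part is the first-order optimality condition of the convex function
  \<open>x\<^sub>i \<mapsto> f\<^sub>i + ghat(\<cdot>, y\<^sup>*)\<close> on \<open>X\<^sub>i\<close>. Hence
  \<open>J\<^sub>i(x\<^sup>*) = f\<^sub>i(x\<^sup>*) + ghat(x\<^sup>*, y\<^sup>*) \<le> f\<^sub>i(x\<^sub>i, x\<^sup>*\<^sub>-\<^sub>i) + ghat((x\<^sub>i, x\<^sup>*\<^sub>-\<^sub>i), y\<^sup>*) \<le> J\<^sub>i(x\<^sub>i, x\<^sup>*\<^sub>-\<^sub>i)\<close>.\<close>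

lemma grad_eqI:
  fixes h :: "'v::real_inner \<Rightarrow> real"
  assumes "GDERIV h v :> D"
  shows "grad h v = D"
  unfolding grad_def
proof (rule the_equality)
  fix D' assume "GDERIV h v :> D'"
  then have "(\<lambda>k. inner k D') = (\<lambda>k. inner k D)"
    using has_derivative_unique assms unfolding gderiv_def by blast
  then have "inner (D' - D) (D' - D) = 0"
    by (metis inner_diff_left inner_diff_right right_minus_eq)
  then show "D' = D" by simp
qed (fact assms)

lemma gderiv_grad:
  fixes h :: "'v::euclidean_space \<Rightarrow> real"
  assumes "h differentiable at v"
  shows "GDERIV h v :> grad h v"
proof -
  obtain h' where h': "(h has_derivative h') (at v)"
    using assms differentiable_def by blast
  then have "linear h'" using has_derivative_linear by blast
  define D where "D = (\<Sum>b\<in>Basis. h' b *\<^sub>R b)"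
  have "h' k = inner k D" for k
  proof -
    have "h' k = h' (\<Sum>b\<in>Basis. inner k b *\<^sub>R b)" by (simp add: euclidean_representation)
    also have "\<dots> = (\<Sum>b\<in>Basis. inner k b * h' b)"
      using \<open>linear h'\<close> by (simp add: linear_sum linear_scale)
    also have "\<dots> = inner k D" unfolding D_def by (simp add: inner_sum_right mult.commute)
    finally show ?thesis .
  qed
  then have "GDERIV h v :> D" unfolding gderiv_def using h' by (metis ext)
  then show ?thesis using grad_eqI by metis
qed

lemma convex_on_gderiv_above_tangent:
  fixes \<phi> :: "'v::real_inner \<Rightarrow> real"
  assumes convex: "convex_on UNIV \<phi>" and deriv: "GDERIV \<phi> a :> D"
  shows "inner (u - a) D \<le> \<phi> u - \<phi> a"
proof -
  define d where "d = u - a"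
  define \<psi> where "\<psi> t = \<phi> (a + t *\<^sub>R d)" for t :: real
  have "convex_on UNIV \<psi>"
  proof (rule convex_onI)
    fix t s r :: real assume "0 < t" "t < 1"
    have "a + ((1 - t) * s + t * r) *\<^sub>R d = (1 - t) *\<^sub>R (a + s *\<^sub>R d) + t *\<^sub>R (a + r *\<^sub>R d)"
      by (simp add: algebra_simps scaleR_add_left[symmetric] del: scaleR_add_left)
    then show "\<psi> ((1 - t) *\<^sub>R s + t *\<^sub>R r) \<le> (1 - t) * \<psi> s + t * \<psi> r"
      unfolding \<psi>_def using convex_onD[OF convex, of t] \<open>0 < t\<close> \<open>t < 1\<close> by simp
  qed simp
  moreover have "(\<psi> has_field_derivative inner d D) (at 0)"
  proof -
    have "((\<lambda>t. a + t *\<^sub>R d) has_derivative (\<lambda>t. t *\<^sub>R d)) (at 0)"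
      by (auto intro!: derivative_eq_intros)
    moreover have "(\<phi> has_derivative (\<lambda>k. inner k D)) (at (a + 0 *\<^sub>R d))"
      using deriv by (simp add: gderiv_def)
    ultimately have "(\<psi> has_derivative (\<lambda>t. inner (t *\<^sub>R d) D)) (at 0)"
      unfolding \<psi>_def by (rule has_derivative_compose)
    then show ?thesis
      by (simp add: has_field_derivative_def mult.commute[of _ "inner d D"])
  qed
  ultimately have "\<psi> 1 - \<psi> 0 \<ge> inner d D * (1 - 0)"
    by (intro convex_on_imp_above_tangent) auto
  then show ?thesis unfolding \<psi>_def d_def by simp
qed

lemma convex_on_sum_cmul:
  fixes h :: "'i \<Rightarrow> 'v::real_vector \<Rightarrow> real"
  assumes "finite I" "\<And>m. m \<in> I \<Longrightarrow> 0 \<le> c m" "\<And>m. m \<in> I \<Longrightarrow> convex_on UNIV (h m)"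
  shows "convex_on UNIV (\<lambda>u. \<Sum>m\<in>I. c m * h m u)"
  using assms by (induction I rule: finite_induct) (auto simp: convex_on_const intro!: convex_on_add convex_on_cmul)

lemma blk_upd_eq_axis: "blk_upd x i u = blk_upd x i 0 + axis i u"
  unfolding blk_upd_def axis_def by (simp add: vec_eq_iff)

lemma blk_upd_minus: "blk_upd x i u - x = axis i (u - x $ i)"
  unfolding blk_upd_def axis_def by (simp add: vec_eq_iff)

lemma blk_upd_same [simp]: "blk_upd x i (x $ i) = x"
  unfolding blk_upd_def by (simp add: vec_eq_iff)

lemma blk_upd_in_prod_set: "x \<in> prod_set X \<Longrightarrow> u \<in> X i \<Longrightarrow> blk_upd x i u \<in> prod_set X"
  unfolding prod_set_def blk_upd_def by auto

lemma bounded_linear_axis: "bounded_linear (axis i :: 'b::euclidean_space \<Rightarrow> 'b^'n)"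
proof -
  have "linear (axis i :: 'b \<Rightarrow> 'b^'n)" by (rule linearI) (auto simp: axis_def vec_eq_iff)
  then show ?thesis by (simp add: linear_conv_bounded_linear)
qed

lemma has_derivative_blk_upd: "(blk_upd x i has_derivative axis i) F"
  by (subst blk_upd_eq_axis[abs_def])
     (auto intro!: derivative_eq_intros bounded_linear.has_derivative[OF bounded_linear_axis])

lemma gderiv_pgrad:
  assumes "h differentiable at x"
  shows "GDERIV (\<lambda>u. h (blk_upd x i u)) (x $ i) :> pgrad h i x"
    and "pgrad h i x = grad h x $ i"
proof -
  have "(h has_derivative (\<lambda>k. inner k (grad h x))) (at (blk_upd x i (x $ i)))"
    using gderiv_grad[OF assms] by (simp add: gderiv_def)
  from has_derivative_compose[OF has_derivative_blk_upd this]
  have "GDERIV (\<lambda>u. h (blk_upd x i u)) (x $ i) :> grad h x $ i"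
    unfolding gderiv_def by (simp add: inner_axis')
  then show "pgrad h i x = grad h x $ i"
    unfolding pgrad_def by (rule grad_eqI)
  with \<open>GDERIV _ _ :> grad h x $ i\<close>
  show "GDERIV (\<lambda>u. h (blk_upd x i u)) (x $ i) :> pgrad h i x" by simp
qed

lemma prod_set_eq_INT: "prod_set X = (\<Inter>i. (\<lambda>x. x $ i) -` X i)"
  unfolding prod_set_def by auto

lemma compact_prod_set:
  assumes "\<And>i. compact (X i)"
  shows "compact (prod_set X)"
proof -
  have "closed (prod_set X)"
    unfolding prod_set_eq_INT using assms
    by (intro closed_INT ballI continuous_closed_vimage)
       (auto simp: compact_imp_closed intro: continuous_intros)
  moreover have "\<exists>b. \<forall>u\<in>X i. norm u \<le> b" for i
    using assms compact_imp_bounded bounded_iff by metis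
  then obtain B where B: "\<And>i u. u \<in> X i \<Longrightarrow> norm u \<le> B i" by metis
  have "norm x \<le> (\<Sum>i\<in>UNIV. B i)" if "x \<in> prod_set X" for x
  proof -
    have "norm x \<le> (\<Sum>i\<in>UNIV. norm (x $ i))" by (simp add: norm_vec_def L2_set_le_sum)
    also have "\<dots> \<le> (\<Sum>i\<in>UNIV. B i)" using that B unfolding prod_set_def by (intro sum_mono) auto
    finally show ?thesis .
  qed
  then have "bounded (prod_set X)" unfolding bounded_iff by blast
  ultimately show ?thesis by (simp add: compact_eq_bounded_closed)
qed

lemma convex_prod_set: "(\<And>i. convex (X i)) \<Longrightarrow> convex (prod_set X)"
  unfolding convex_def prod_set_def by auto

lemma prod_set_nonempty: "(\<And>i. X i \<noteq> {}) \<Longrightarrow> prod_set X \<noteq> {}"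
proof -
  assume "\<And>i. X i \<noteq> {}"
  then have "(\<chi> i. SOME u. u \<in> X i) \<in> prod_set X"
    unfolding prod_set_def by (simp add: some_in_eq)
  then show ?thesis by blast
qed

lemma compact_prob_simplex: "compact (prob_simplex :: (real^'m::finite) set)"
proof -
  have "closed ({y::real^'m. \<forall>m. 0 \<le> y $ m} \<inter> (\<lambda>y. \<Sum>m\<in>UNIV. y $ m) -` {1})"
    by (intro closed_Int closed_positive_orthant continuous_closed_vimage)
       (auto intro!: continuous_intros)
  moreover have "{y::real^'m. \<forall>m. 0 \<le> y $ m} \<inter> (\<lambda>y. \<Sum>m\<in>UNIV. y $ m) -` {1} = prob_simplex"
    unfolding prob_simplex_def by auto
  moreover have "norm y \<le> 1" if "y \<in> (prob_simplex :: (real^'m) set)" for y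
    using norm_le_l1_cart[of y] that unfolding prob_simplex_def by simp
  then have "bounded (prob_simplex :: (real^'m) set)" unfolding bounded_iff by blast
  ultimately show ?thesis by (simp add: compact_eq_bounded_closed)
qed

lemma convex_prob_simplex: "convex (prob_simplex :: (real^'m::finite) set)"
  unfolding convex_def prob_simplex_def by (auto simp: sum.distrib sum_distrib_left[symmetric])

lemma axis_in_prob_simplex: "axis k 1 \<in> (prob_simplex :: (real^'m::finite) set)"
  unfolding prob_simplex_def axis_def by simp

lemma inner_prob_simplex_le_Max:
  fixes c :: "'m::finite \<Rightarrow> real"
  assumes "y \<in> prob_simplex"
  shows "inner y (\<chi> m. c m) \<le> Max (range c)"
proof -
  have "inner y (\<chi> m. c m) \<le> (\<Sum>m\<in>UNIV. y $ m * Max (range c))"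
    using assms unfolding inner_vec_def prob_simplex_def by (auto intro!: sum_mono mult_left_mono Max_ge)
  also have "\<dots> = Max (range c)"
    using assms unfolding prob_simplex_def by (simp add: sum_distrib_right[symmetric])
  finally show ?thesis .
qed

section \<open>Existence of solutions of variational inequalities\<close>

lemma VI_sol_exists:
  fixes F :: "'v::euclidean_space \<Rightarrow> 'v"
  assumes K: "compact K" "convex K" "K \<noteq> {}" and F: "continuous_on K F"
  shows "\<exists>z. VI_sol F K z"
proof -
  define T where "T z = closest_point K (z - F z)" for z
  have "closed K" using K by (simp add: compact_imp_closed)
  have "continuous_on K T" unfolding T_def
    by (intro continuous_on_compose2[OF continuous_on_closest_point[OF K(2) \<open>closed K\<close> K(3)]])
       (auto intro!: continuous_intros F)
  moreover have "T \<in> K \<rightarrow> K" unfolding T_def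
    using closest_point_in_set[OF \<open>closed K\<close> K(3)] by blast
  ultimately obtain z where "z \<in> K" and fixed: "T z = z" using brouwer[OF K] by blast
  have "0 \<le> inner (w - z) (F z)" if "w \<in> K" for w
    using closest_point_dot[OF K(2) \<open>closed K\<close> that, of "z - F z"] fixed
    unfolding T_def by (simp add: inner_commute)
  with \<open>z \<in> K\<close> show ?thesis unfolding VI_sol_def by blast
qed

lemma ghat_eq_inner: "ghat g \<theta> x y = inner y (\<chi> m. g x (\<theta> m))"
  by (simp add: ghat_def inner_vec_def)

lemma grad_ghat_y: "grad (\<lambda>y'. ghat g \<theta> x y') y = (\<chi> m. g x (\<theta> m))"
  unfolding ghat_eq_inner
  by (rule grad_eqI) (simp add: gderiv_def bounded_linear_inner_left bounded_linear_imp_has_derivative)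

lemma gderiv_ghat_x:
  assumes "\<And>m. (\<lambda>w. g w (\<theta> m)) differentiable at x"
  shows "GDERIV (\<lambda>x'. ghat g \<theta> x' y) x :> (\<Sum>m\<in>UNIV. y $ m *\<^sub>R grad (\<lambda>w. g w (\<theta> m)) x)"
proof -
  have "((\<lambda>w. g w (\<theta> m)) has_derivative (\<lambda>k. inner k (grad (\<lambda>w. g w (\<theta> m)) x))) (at x)" for m
    using gderiv_grad[OF assms] by (simp add: gderiv_def)
  then have "((\<lambda>x'. \<Sum>m\<in>UNIV. y $ m * g x' (\<theta> m)) has_derivative
        (\<lambda>k. \<Sum>m\<in>UNIV. y $ m * inner k (grad (\<lambda>w. g w (\<theta> m)) x))) (at x)"
    by (intro has_derivative_sum has_derivative_mult_right)
  then show ?thesis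
    unfolding gderiv_def ghat_def by (simp add: inner_sum_right)
qed

lemma Fop_eq_grad:
  assumes "\<And>i. f i differentiable at x" and "\<And>m. (\<lambda>w. g w (\<theta> m)) differentiable at x"
  shows "Fop f g \<theta> (x, y) =
    ((\<chi> i. grad (f i) x $ i) + (\<Sum>m\<in>UNIV. y $ m *\<^sub>R grad (\<lambda>w. g w (\<theta> m)) x),
     - (\<chi> m. g x (\<theta> m)))"
proof -
  note ghat_x = gderiv_ghat_x[where g = g and \<theta> = \<theta> and x = x and y = y, OF assms(2)]
  then have ghat_diff: "(\<lambda>x'. ghat g \<theta> x' y) differentiable at x"
    unfolding gderiv_def differentiable_def by blast
  show ?thesis
    unfolding Fop_def using gderiv_pgrad(2)[OF assms(1)] gderiv_pgrad(2)[OF ghat_diff] grad_eqI[OF ghat_x]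
    by (simp add: grad_ghat_y vec_eq_iff)
qed

lemma continuous_on_Fop:
  assumes "\<And>i x. x \<in> S \<Longrightarrow> f i differentiable at x"
    and "\<And>m x. x \<in> S \<Longrightarrow> (\<lambda>w. g w (\<theta> m)) differentiable at x"
    and "\<And>i. continuous_on S (grad (f i))"
    and "\<And>m. continuous_on S (grad (\<lambda>w. g w (\<theta> m)))"
  shows "continuous_on (S \<times> T) (Fop f g \<theta>)"
proof (rule continuous_on_eq)
  have "continuous_on S (\<lambda>x. g x (\<theta> m))" for m
    using assms(2) by (meson continuous_at_imp_continuous_on differentiable_imp_continuous_within)
  then show "continuous_on (S \<times> T) (\<lambda>z.
      ((\<chi> i. grad (f i) (fst z) $ i) + (\<Sum>m\<in>UNIV. snd z $ m *\<^sub>R grad (\<lambda>w. g w (\<theta> m)) (fst z)),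
       - (\<chi> m. g (fst z) (\<theta> m))))"
    using assms(3,4)
    by (auto intro!: continuous_intros continuous_on_compose2[where g = "grad _" and f = fst and s = "S \<times> T"]
        continuous_on_compose2[where f = fst and s = "S \<times> T", of S "\<lambda>x. g x (\<theta> _)"])
next
  fix z assume "z \<in> S \<times> T"
  then show "((\<chi> i. grad (f i) (fst z) $ i) + (\<Sum>m\<in>UNIV. snd z $ m *\<^sub>R grad (\<lambda>w. g w (\<theta> m)) (fst z)),
       - (\<chi> m. g (fst z) (\<theta> m))) = Fop f g \<theta> z"
    using Fop_eq_grad[of f "fst z" g \<theta> "snd z"] assms(1,2) by auto
qed

section \<open>Solutions of the variational inequality are equilibria\<close>

lemma Max_le_ghat_if_VI_sol:
  assumes "VI_sol (Fop f g \<theta>) (S \<times> prob_simplex) (x, y)"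
  shows "Max (range (\<lambda>m. g x (\<theta> m))) \<le> ghat g \<theta> x y"
proof -
  have "x \<in> S" using assms unfolding VI_sol_def by simp
  have "g x (\<theta> k) \<le> ghat g \<theta> x y" for k
  proof -
    have "(x, axis k 1) \<in> S \<times> prob_simplex" using \<open>x \<in> S\<close> axis_in_prob_simplex by simp
    with assms have "0 \<le> inner ((x, axis k 1) - (x, y)) (Fop f g \<theta> (x, y))"
      unfolding VI_sol_def by blast
    then show ?thesis
      unfolding Fop_def grad_ghat_y by (simp add: ghat_eq_inner inner_diff_left inner_axis')
  qed
  then show ?thesis by (simp add: Max_le_iff)
qed

lemma ghat_best_response_if_VI_sol:
  assumes VI: "VI_sol (Fop f g \<theta>) (prod_set X \<times> prob_simplex) (x, y)"
    and convex: "\<And>m. convex_on UNIV (\<lambda>u. f i (blk_upd x i u) + g (blk_upd x i u) (\<theta> m))"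
    and diff_f: "f i differentiable at x"
    and diff_g: "\<And>m. (\<lambda>w. g w (\<theta> m)) differentiable at x"
    and "u \<in> X i"
  shows "f i x + ghat g \<theta> x y \<le> f i (blk_upd x i u) + ghat g \<theta> (blk_upd x i u) y"
proof -
  define \<phi> where "\<phi> u' = f i (blk_upd x i u') + ghat g \<theta> (blk_upd x i u') y" for u'
  have x: "x \<in> prod_set X" and y: "y \<in> prob_simplex" using VI unfolding VI_sol_def by auto
  have "\<phi> = (\<lambda>u'. \<Sum>m\<in>UNIV. y $ m * (f i (blk_upd x i u') + g (blk_upd x i u') (\<theta> m)))"
    using y unfolding \<phi>_def ghat_def prob_simplex_def
    by (auto simp: algebra_simps sum.distrib sum_distrib_right[symmetric])
  then have cvx: "convex_on UNIV \<phi>"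
    using y convex unfolding prob_simplex_def by (simp add: convex_on_sum_cmul)
  have deriv: "GDERIV \<phi> (x $ i) :> fst (Fop f g \<theta> (x, y)) $ i"
  proof -
    have "(\<lambda>x'. ghat g \<theta> x' y) differentiable at x"
      using gderiv_ghat_x[where g = g and \<theta> = \<theta>, OF diff_g]
      unfolding gderiv_def differentiable_def by blast
    from GDERIV_add[OF gderiv_pgrad(1)[OF diff_f] gderiv_pgrad(1)[OF this]]
    show ?thesis unfolding \<phi>_def Fop_def by simp
  qed
  have "0 \<le> inner (u - x $ i) (fst (Fop f g \<theta> (x, y)) $ i)"
  proof -
    have "(blk_upd x i u, y) \<in> prod_set X \<times> prob_simplex"
      using x y \<open>u \<in> X i\<close> by (simp add: blk_upd_in_prod_set)
    with VI have "0 \<le> inner ((blk_upd x i u, y) - (x, y)) (Fop f g \<theta> (x, y))"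
      unfolding VI_sol_def by blast
    then show ?thesis by (cases "Fop f g \<theta> (x, y)") (simp add: blk_upd_minus inner_axis')
  qed
  with convex_on_gderiv_above_tangent[OF cvx deriv, of u] have "\<phi> (x $ i) \<le> \<phi> u"
    by linarith
  then show ?thesis unfolding \<phi>_def by simp
qed

lemma nash_if_VI_sol:
  assumes VI: "VI_sol (Fop f g \<theta>) (prod_set X \<times> prob_simplex) (x, y)"
    and convex: "\<And>i m. convex_on UNIV (\<lambda>u. f i (blk_upd x i u) + g (blk_upd x i u) (\<theta> m))"
    and diff_f: "\<And>i. f i differentiable at x"
    and diff_g: "\<And>m. (\<lambda>w. g w (\<theta> m)) differentiable at x"
  shows "x \<in> nash_set f g \<theta> X"
proof -
  have y: "y \<in> prob_simplex" using VI unfolding VI_sol_def by auto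
  have "cost f g \<theta> i x \<le> cost f g \<theta> i (blk_upd x i u)" if "u \<in> X i" for i u
    using ghat_best_response_if_VI_sol[OF VI convex diff_f diff_g that] Max_le_ghat_if_VI_sol[OF VI]
      inner_prob_simplex_le_Max[OF y, of "\<lambda>m. g (blk_upd x i u) (\<theta> m)"]
    unfolding cost_def ghat_eq_inner by linarith
  then show ?thesis using VI unfolding nash_set_def VI_sol_def by auto
qed

theorem proposition2:
  fixes f :: "'a::finite \<Rightarrow> real^'n::finite^'a \<Rightarrow> real"
    and g :: "real^'n^'a \<Rightarrow> 'th \<Rightarrow> real"
    and Theta :: "'th set"
    and X :: "'a \<Rightarrow> (real^'n) set"
    and \<theta> :: "'m::finite \<Rightarrow> 'th"
    and \<chi>f \<chi>g :: real
  assumes samples: "\<And>m. \<theta> m \<in> Theta"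
    \<comment> \<open>Assumption 1(i)\<close>
    and A1_convex: "\<And>th i x. th \<in> Theta \<Longrightarrow> (\<forall>j. j \<noteq> i \<longrightarrow> x $ j \<in> X j) \<Longrightarrow>
         convex_on UNIV (\<lambda>u. f i (blk_upd x i u) + g (blk_upd x i u) th)"
    and A1_C1: "\<And>th i x. th \<in> Theta \<Longrightarrow> (\<forall>j. j \<noteq> i \<longrightarrow> x $ j \<in> X j) \<Longrightarrow>
         (\<forall>u. (\<lambda>u. f i (blk_upd x i u) + g (blk_upd x i u) th) differentiable at u) \<and>
         continuous_on UNIV (grad (\<lambda>u. f i (blk_upd x i u) + g (blk_upd x i u) th))"
    and A1_sets: "\<And>i. X i \<noteq> {} \<and> compact (X i) \<and> convex (X i)"
    \<comment> \<open>Assumption 1(ii)\<close>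
    and A1_twice_g: "\<And>th. th \<in> Theta \<Longrightarrow> \<exists>U. open U \<and> convex U \<and> prod_set X \<subseteq> U \<and>
         (\<forall>x\<in>U. (\<lambda>u. g u th) differentiable at x) \<and>
         (\<forall>x\<in>U. grad (\<lambda>u. g u th) differentiable at x)"
    and A1_twice_f: "\<And>i. \<exists>U. open U \<and> convex U \<and> prod_set X \<subseteq> U \<and>
         (\<forall>x\<in>U. f i differentiable at x) \<and>
         (\<forall>x\<in>U. grad (f i) differentiable at x)"
    \<comment> \<open>Assumption 1(iii)\<close>
    and A1_sum: "\<chi>f + \<chi>g \<ge> 0"
    and A1_monf: "\<And>u v. inner (u - v) ((\<chi> i. pgrad (f i) i u) - (\<chi> i. pgrad (f i) i v))
                          \<ge> \<chi>f * (norm (u - v))\<^sup>2"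
    and A1_mong: "\<And>u v th. th \<in> Theta \<Longrightarrow>
         inner (u - v) (grad (\<lambda>w. g w th) u - grad (\<lambda>w. g w th) v) \<ge> \<chi>g * (norm (u - v))\<^sup>2"
  shows "(\<exists>z. VI_sol (Fop f g \<theta>) (prod_set X \<times> prob_simplex) z) \<and>
         (\<forall>xs ys. VI_sol (Fop f g \<theta>) (prod_set X \<times> prob_simplex) (xs, ys) \<longrightarrow> xs \<in> nash_set f g \<theta> X)"
proof -
  have diff_f: "f i differentiable at x" "grad (f i) differentiable at x"
    if "x \<in> prod_set X" for i x using A1_twice_f[of i] that by blast+
  have diff_g: "(\<lambda>w. g w (\<theta> m)) differentiable at x" "grad (\<lambda>w. g w (\<theta> m)) differentiable at x"
    if "x \<in> prod_set X" for m x using A1_twice_g[OF samples[of m]] that by blast+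
  have "continuous_on (prod_set X \<times> prob_simplex) (Fop f g \<theta>)"
    using diff_f diff_g
    by (intro continuous_on_Fop continuous_at_imp_continuous_on)
       (auto intro: differentiable_imp_continuous_within)
  then have "\<exists>z. VI_sol (Fop f g \<theta>) (prod_set X \<times> prob_simplex) z"
    using A1_sets
    by (intro VI_sol_exists compact_Times convex_Times compact_prod_set convex_prod_set
        compact_prob_simplex convex_prob_simplex)
       (use axis_in_prob_simplex in \<open>auto simp: prod_set_nonempty\<close>)
  moreover have "xs \<in> nash_set f g \<theta> X"
    if VI: "VI_sol (Fop f g \<theta>) (prod_set X \<times> prob_simplex) (xs, ys)" for xs ys
  proof -
    have "xs \<in> prod_set X" using VI unfolding VI_sol_def by simp
    then show ?thesis
      using A1_convex[OF samples] diff_f diff_g unfolding prod_set_def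
      by (intro nash_if_VI_sol[OF VI]) auto
  qed
  ultimately show ?thesis by blast
qed

end
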